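(* Consider the system of ordinary differential equations for $(x(t),h(t),n(t))$: \[ \frac{dx}{dt} = x(1-x)S(h) + \mu(h)(1-x) - \nu x,\qquad \frac{dh}{dt} = \alpha n(1+\beta x)\,G(h) - \Gamma(n)(h-1),\qquad \frac{dn}{dt} = r n(1-n) - D(h,x)\,n, \] where \[ S(h) = \frac{s_0}{1+e^{-\lambda(h-h_c)}} - c + \varphi\, d_S(h),\quad d_S(h) = \frac{d_{\max} h^m}{h_{50}^m + h^m},\quad \mu(h)=\mu_0 h^p, \] \[ G(h) = \frac{K_g}{K_g+h},\quad \Gamma(n) = \frac{\gamma_0}{1+\eta n},\quad D(h,x) = (1-\varphi x)\,d_S(h), \] and all parameters $s_0,\lambda,h_c,c,\varphi,d_{\max},h_{50},m,\mu_0,p,\nu,\alpha,\beta,K_g,\gamma_0,\eta,r$ are positive. Let $x^*\in(0,1)$ be the unique solution in $(0,1)$ of $x(1-x)S(1) + \mu_0(1-x) - \nu x = 0$, so that $E_0 = (x^*,1,0)$ is an equilibrium of the system. Define $\mathcal{R}_0 = \dfrac{r}{D(1,x^* )}$. Then $E_0$ is locally asymptotically stable if $\mathcal{R}_0<1$ and unstable if $\mathcal{R}_0>1$.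
   Context: The model describes a tumor: $x$ is the fraction of acid-resistant cells, $h$ is the normalized proton concentration ($h=1$ physiological), $n$ is normalized tumor density. $E_0$ is the tumor-extinction equilibrium and $\mathcal{R}_0$ is called the basic reproduction number of the tumor cell population.
   Formalization: Both clauses assume in addition that $D(1,x^* ) > 0$, that is $\varphi x^* < 1$. The statement above fails without it. *)

theory Defs
  imports "HOL-Analysis.Analysis"
begin

definition is_solution :: "('a::real_normed_vector \<Rightarrow> 'a) \<Rightarrow> real set \<Rightarrow> (real \<Rightarrow> 'a) \<Rightarrow> bool" where
  "is_solution F I y \<longleftrightarrow> (\<forall>t\<in>I. (y has_vector_derivative F (y t)) (at t within I))"

text \<open>Lyapunov stability of an equilibrium E (quantifying over all solutions on
  arbitrary compact time intervals [0,T], so that no global existence is presupposed).\<close>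
definition lyapunov_stable :: "('a::real_normed_vector \<Rightarrow> 'a) \<Rightarrow> 'a \<Rightarrow> bool" where
  "lyapunov_stable F E \<longleftrightarrow>
     (\<forall>\<epsilon>>0. \<exists>\<delta>>0. \<forall>T y. T \<ge> 0 \<and> is_solution F {0..T} y \<and> dist (y 0) E < \<delta>
        \<longrightarrow> (\<forall>t\<in>{0..T}. dist (y t) E < \<epsilon>))"

definition locally_attractive :: "('a::real_normed_vector \<Rightarrow> 'a) \<Rightarrow> 'a \<Rightarrow> bool" where
  "locally_attractive F E \<longleftrightarrow>
     (\<exists>\<delta>>0. \<forall>y. is_solution F {0..} y \<and> dist (y 0) E < \<delta> \<longrightarrow> (y \<longlongrightarrow> E) at_top)"

definition locally_asymptotically_stable :: "('a::real_normed_vector \<Rightarrow> 'a) \<Rightarrow> 'a \<Rightarrow> bool" where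
  "locally_asymptotically_stable F E \<longleftrightarrow> lyapunov_stable F E \<and> locally_attractive F E"

definition unstable :: "('a::real_normed_vector \<Rightarrow> 'a) \<Rightarrow> 'a \<Rightarrow> bool" where
  "unstable F E \<longleftrightarrow> \<not> lyapunov_stable F E"

end

theory Submission
  imports Defs
begin

(* At E0 = (xs, 1, 0) the Jacobian of the vector field is upper triangular, with diagonal entries
   (1 - 2 xs) S 1 - mu 1 - nu,  - Gam 0  and  r - D(1, xs); the first one is negative because
   of the equation defining xs.  If r < D(1, xs), a weighted quadratic form u^2 + K v^2 + L w^2
   in the deviations is a strict Lyapunov function near E0, so nearby solutions decay
   exponentially.  If r > D(1, xs), the density obeys n' = n (r (1 - n) - D(h, x)) with a bracket
   exceeding (r - D(1, xs)) / 2 near E0, so a small positive density grows exponentially and the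
   solution leaves a fixed ball; the solutions witnessing this come from Picard iteration for a
   Lipschitz extension of the vector field. *)

section \<open>Solutions, barriers and differential inequalities\<close>

lemma is_solution_continuous_on:
  assumes "is_solution F I y"
  shows "continuous_on I y"
  using assms has_vector_derivative_continuous
  unfolding is_solution_def continuous_on_eq_continuous_within by blast

lemma is_solution_subset:
  assumes "is_solution F I y" "J \<subseteq> I"
  shows "is_solution F J y"
  using assms has_vector_derivative_within_subset unfolding is_solution_def by blast

lemma is_solution_has_vector_derivative_at:
  assumes "is_solution F {0..T} y" "0 < t" "t < T"
  shows "(y has_vector_derivative F (y t)) (at t)"
proof -
  have "(y has_vector_derivative F (y t)) (at t within {0..T})"
    using assms unfolding is_solution_def by auto
  moreover have "at t within {0..T} = at t" using assms(2,3) by (intro at_within_interior) simp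
  ultimately show ?thesis by simp
qed

lemma continuous_on_stays_below:
  fixes w :: "real \<Rightarrow> real"
  assumes cont: "continuous_on {0..T} w" and start: "w 0 < R"
    and step: "\<And>s. 0 < s \<Longrightarrow> s \<le> T \<Longrightarrow> (\<forall>t\<in>{0..s}. w t \<le> R) \<Longrightarrow> (\<forall>t\<in>{0..<s}. w t < R) \<Longrightarrow> w s < R"
  shows "\<forall>t\<in>{0..T}. w t < R"
proof (rule ccontr)
  assume "\<not> (\<forall>t\<in>{0..T}. w t < R)"
  define B where "B = {0..T} \<inter> w -` {R..}"
  have "B \<noteq> {}" using \<open>\<not> (\<forall>t\<in>{0..T}. w t < R)\<close> by (auto simp: B_def not_less)
  moreover have "closed B" unfolding B_def by (rule continuous_closed_preimage[OF cont]) auto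
  moreover have B_bdd: "bdd_below B" by (auto simp: B_def bdd_below_def)
  ultimately have exit: "Inf B \<in> B" using closed_contains_Inf by blast
  define s where "s = Inf B"
  have s: "0 < s" "s \<le> T" "R \<le> w s"
    using exit start by (auto simp: s_def B_def order.order_iff_strict)
  have before: "\<forall>t\<in>{0..<s}. w t < R"
    using cInf_lower[OF _ B_bdd] s by (force simp: s_def B_def not_le)
  have "{0..<s} \<subseteq> {0..s} \<inter> w -` {..R}" using before by (auto simp: less_imp_le)
  moreover have "closed ({0..s} \<inter> w -` {..R})"
    using s by (intro continuous_closed_preimage continuous_on_subset[OF cont]) auto
  ultimately have "closure {0..<s} \<subseteq> {0..s} \<inter> w -` {..R}" by (rule closure_minimal)
  then have "\<forall>t\<in>{0..s}. w t \<le> R" using s by auto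
  then have "w s < R" using step[OF s(1,2) _ before] by blast
  then show False using s by simp
qed

lemma exp_bound_if_derivative_le:
  fixes g g' :: "real \<Rightarrow> real"
  assumes "0 \<le> s" "continuous_on {0..s} g"
    and deriv: "\<And>t. 0 < t \<Longrightarrow> t < s \<Longrightarrow> (g has_real_derivative g' t) (at t)"
    and le: "\<And>t. 0 < t \<Longrightarrow> t < s \<Longrightarrow> g' t \<le> k * g t"
  shows "g s \<le> g 0 * exp (k * s)"
proof -
  have "g s * exp (- k * s) \<le> g 0 * exp (- k * 0)"
  proof (rule DERIV_nonpos_imp_decreasing_open[OF \<open>0 \<le> s\<close>])
    fix t assume t: "0 < t" "t < s"
    have "((\<lambda>t. g t * exp (- k * t)) has_real_derivative (g' t - k * g t) * exp (- k * t)) (at t)"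
      by (rule derivative_eq_intros deriv[OF t] refl | simp add: algebra_simps)+
    moreover have "(g' t - k * g t) * exp (- k * t) \<le> 0"
      using le[OF t] by (simp add: mult_nonpos_nonneg)
    ultimately show "\<exists>D. ((\<lambda>t. g t * exp (- k * t)) has_real_derivative D) (at t) \<and> D \<le> 0" by blast
  qed (intro continuous_intros assms)
  then have "g s * exp (- k * s) * exp (k * s) \<le> g 0 * exp (k * s)" by simp
  then show ?thesis by (simp add: mult.assoc flip: exp_add)
qed

section \<open>Exponential Lyapunov functions\<close>

locale exponential_lyapunov_function =
  fixes F :: "'a::real_normed_vector \<Rightarrow> 'a" and E :: 'a
    and W :: "'a \<Rightarrow> real" and W' :: "'a \<Rightarrow> 'a \<Rightarrow> real" and M c \<delta> :: real
  assumes W_lower: "\<And>z. (norm (z - E))\<^sup>2 \<le> W z"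
    and W_upper: "\<And>z. W z \<le> M * (norm (z - E))\<^sup>2"
    and W_deriv: "\<And>z. (W has_derivative W' z) (at z)"
    and W_decreases: "\<And>z. norm (z - E) < \<delta> \<Longrightarrow> W' z (F z) \<le> - c * W z"
    and M_pos: "0 < M" and c_pos: "0 < c" and \<delta>_pos: "0 < \<delta>"
begin

lemma W_nonneg: "0 \<le> W z"
  using W_lower[of z] by (meson order_trans zero_le_power2)

lemma W_less_if_close:
  assumes "0 < r" "dist z E < r / sqrt M"
  shows "W z < r\<^sup>2"
proof -
  have "(norm (z - E))\<^sup>2 < (r / sqrt M)\<^sup>2"
    using assms by (intro power_strict_mono) (auto simp: dist_norm)
  then have "M * (norm (z - E))\<^sup>2 < r\<^sup>2"
    using M_pos by (simp add: field_simps)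
  then show ?thesis using W_upper[of z] by linarith
qed

lemma norm_less_if_W_less:
  assumes "W z < r\<^sup>2" "0 < r"
  shows "norm (z - E) < r"
  using W_lower[of z] assms by (smt (verit) power_less_imp_less_base)

lemma W_has_derivative_along_solution:
  assumes y: "is_solution F {0..T} y" and t: "0 < t" "t < T"
  shows "((\<lambda>t. W (y t)) has_real_derivative W' (y t) (F (y t))) (at t)"
proof -
  have "((W \<circ> y) has_vector_derivative W' (y t) (F (y t))) (at t)"
    using vector_derivative_diff_chain_within[OF is_solution_has_vector_derivative_at[OF y t]]
      has_derivative_at_withinI[OF W_deriv] by blast
  then show ?thesis by (simp add: o_def has_real_derivative_iff_has_vector_derivative)
qed

lemma decay_along_solution:
  assumes y: "is_solution F {0..T} y" and start: "W (y 0) < \<delta>\<^sup>2"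
  shows "\<forall>t\<in>{0..T}. W (y t) \<le> W (y 0) * exp (- c * t)"
proof -
  have cont: "continuous_on {0..T} (\<lambda>t. W (y t))"
    using continuous_on_compose2[OF continuous_at_imp_continuous_on is_solution_continuous_on[OF y]]
      has_derivative_continuous[OF W_deriv] by blast
  have decay: "W (y s) \<le> W (y 0) * exp (- c * s)"
    if s: "0 \<le> s" "s \<le> T" and close: "\<forall>t\<in>{0..<s}. W (y t) < \<delta>\<^sup>2" for s
  proof (rule exp_bound_if_derivative_le[OF s(1)])
    show "continuous_on {0..s} (\<lambda>t. W (y t))" using cont s by (auto intro: continuous_on_subset)
    fix t assume t: "0 < t" "t < s"
    show "((\<lambda>t. W (y t)) has_real_derivative W' (y t) (F (y t))) (at t)"
      using W_has_derivative_along_solution[OF y] t s by simp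
    show "W' (y t) (F (y t)) \<le> - c * W (y t)"
      using W_decreases norm_less_if_W_less close t \<delta>_pos by simp
  qed
  have "\<forall>t\<in>{0..T}. W (y t) < \<delta>\<^sup>2"
  proof (rule continuous_on_stays_below[OF cont start])
    fix s assume "0 < s" "s \<le> T" "\<forall>t\<in>{0..<s}. W (y t) < \<delta>\<^sup>2"
    then have "W (y s) \<le> W (y 0) * exp (- c * s)" using decay by simp
    also have "\<dots> \<le> W (y 0)" using W_nonneg c_pos \<open>0 < s\<close> by (simp add: mult_left_le)
    finally show "W (y s) < \<delta>\<^sup>2" using start by simp
  qed
  then show ?thesis using decay by simp
qed

lemma lyapunov_stable: "lyapunov_stable F E"
  unfolding lyapunov_stable_def
proof (intro allI impI)
  fix \<epsilon> :: real assume "0 < \<epsilon>"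
  define r where "r = min \<epsilon> \<delta>"
  have r: "0 < r" "r \<le> \<epsilon>" "r \<le> \<delta>" using \<open>0 < \<epsilon>\<close> \<delta>_pos by (auto simp: r_def)
  show "\<exists>\<delta>'>0. \<forall>T y. 0 \<le> T \<and> is_solution F {0..T} y \<and> dist (y 0) E < \<delta>'
      \<longrightarrow> (\<forall>t\<in>{0..T}. dist (y t) E < \<epsilon>)"
  proof (intro exI conjI allI impI ballI)
    show "0 < r / sqrt M" using r M_pos by simp
    fix T y t
    assume "0 \<le> T \<and> is_solution F {0..T} y \<and> dist (y 0) E < r / sqrt M" and t: "t \<in> {0..T}"
    then have y: "is_solution F {0..T} y" and start: "W (y 0) < r\<^sup>2"
      using W_less_if_close r by auto
    have "r\<^sup>2 \<le> \<delta>\<^sup>2" "r\<^sup>2 \<le> \<epsilon>\<^sup>2" using r by (auto intro: power_mono)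
    then have "W (y t) \<le> W (y 0) * exp (- c * t)" using decay_along_solution[OF y] start t by simp
    also have "\<dots> \<le> W (y 0)" using W_nonneg c_pos t by (simp add: mult_left_le)
    finally have "W (y t) < \<epsilon>\<^sup>2" using start \<open>r\<^sup>2 \<le> \<epsilon>\<^sup>2\<close> by simp
    then show "dist (y t) E < \<epsilon>" using norm_less_if_W_less \<open>0 < \<epsilon>\<close> by (simp add: dist_norm)
  qed
qed

lemma locally_attractive: "locally_attractive F E"
  unfolding locally_attractive_def
proof (intro exI conjI allI impI)
  show "0 < \<delta> / sqrt M" using \<delta>_pos M_pos by simp
  fix y assume "is_solution F {0..} y \<and> dist (y 0) E < \<delta> / sqrt M"
  then have y: "is_solution F {0..} y" and start: "W (y 0) < \<delta>\<^sup>2"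
    using W_less_if_close \<delta>_pos by auto
  have bound: "norm (y t - E) \<le> sqrt (W (y 0) * exp (- c * t))" if "0 \<le> t" for t
  proof -
    have "W (y t) \<le> W (y 0) * exp (- c * t)"
      using decay_along_solution[OF is_solution_subset[OF y] start, of t] that by auto
    then show ?thesis using W_lower[of "y t"] by (intro real_le_rsqrt) linarith
  qed
  have "((\<lambda>t. exp (- c * t)) \<longlongrightarrow> 0) at_top"
    using c_pos by real_asymp
  then have "((\<lambda>t. sqrt (W (y 0) * exp (- c * t))) \<longlongrightarrow> 0) at_top"
    using tendsto_real_sqrt[OF tendsto_mult_right_zero] by fastforce
  then have "((\<lambda>t. y t - E) \<longlongrightarrow> 0) at_top"
    by (rule Lim_null_comparison[rotated]) (use bound in \<open>auto simp: eventually_at_top_linorder\<close>)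
  then show "(y \<longlongrightarrow> E) at_top" by (simp add: Lim_null[symmetric])
qed

theorem locally_asymptotically_stable: "locally_asymptotically_stable F E"
  using lyapunov_stable locally_attractive by (simp add: locally_asymptotically_stable_def)

end

section \<open>Linearised stability for triangular Jacobians in three dimensions\<close>

lemma mult_le_weighted_squares:
  fixes x y k :: real
  assumes "0 < k"
  shows "x * y \<le> k * x\<^sup>2 + y\<^sup>2 / (4 * k)"
proof -
  have "k * x\<^sup>2 + y\<^sup>2 / (4 * k) - x * y = (2 * k * x - y)\<^sup>2 / (4 * k)"
    using assms by (simp add: field_simps power2_eq_square)
  then show ?thesis using assms by (smt (verit) divide_nonneg_pos zero_le_power2)
qed

lemma triangular_quadratic_form_negative:
  fixes a11 a12 a13 a22 a23 a33 :: real
  assumes "a11 < 0" "a22 < 0" "a33 < 0"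
  obtains K L c where "1 \<le> K" "1 \<le> L" "0 < c"
    "\<And>u v w. u * (a11 * u + a12 * v + a13 * w) + K * v * (a22 * v + a23 * w) + L * w * (a33 * w)
       \<le> - c * (u\<^sup>2 + K * v\<^sup>2 + L * w\<^sup>2)"
proof
  define \<alpha> \<beta> \<gamma> where "\<alpha> = - a11" and "\<beta> = - a22" and "\<gamma> = - a33"
  have pos: "0 < \<alpha>" "0 < \<beta>" "0 < \<gamma>" using assms by (auto simp: \<alpha>_def \<beta>_def \<gamma>_def)
  (* K lets the v^2 term absorb the cross term in u v; L then lets the w^2 term absorb
     the cross terms in u w and v w. *)
  define K where "K = 1 + 4 * a12\<^sup>2 / (\<alpha> * \<beta>)"
  define L where "L = 1 + 2 * (a13\<^sup>2 / \<alpha> + K * a23\<^sup>2 / (2 * \<beta>)) / \<gamma>"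
  define c where "c = min (\<alpha> / 2) (min (\<beta> / 4) (\<gamma> / 2))"
  show K: "1 \<le> K" and L: "1 \<le> L" and c: "0 < c"
    using pos by (auto simp: K_def L_def c_def)
  fix u v w :: real
  define P Q R where "P = u\<^sup>2" and "Q = K * v\<^sup>2" and "R = L * w\<^sup>2"
  have "u * (a12 * v) \<le> \<alpha> * P / 4 + a12\<^sup>2 / \<alpha> * v\<^sup>2"
    using mult_le_weighted_squares[of "\<alpha> / 4" u "a12 * v"] pos
    by (simp add: P_def power_mult_distrib)
  moreover have "u * (a13 * w) \<le> \<alpha> * P / 4 + a13\<^sup>2 / \<alpha> * w\<^sup>2"
    using mult_le_weighted_squares[of "\<alpha> / 4" u "a13 * w"] pos
    by (simp add: P_def power_mult_distrib)
  moreover have "K * (v * (a23 * w)) \<le> \<beta> * Q / 2 + K * a23\<^sup>2 / (2 * \<beta>) * w\<^sup>2"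
    using mult_left_mono[OF mult_le_weighted_squares[of "\<beta> / 2" v "a23 * w"], of K] pos K
    by (simp add: Q_def algebra_simps)
  moreover have "a12\<^sup>2 / \<alpha> * v\<^sup>2 \<le> \<beta> * Q / 4"
    using pos by (simp add: Q_def K_def field_simps)
  moreover have "a13\<^sup>2 / \<alpha> * w\<^sup>2 + K * a23\<^sup>2 / (2 * \<beta>) * w\<^sup>2 \<le> \<gamma> * R / 2"
    using pos by (simp add: R_def L_def field_simps)
  moreover have "c * P \<le> \<alpha> * P / 2" "c * Q \<le> \<beta> * Q / 4" "c * R \<le> \<gamma> * R / 2"
  proof -
    have "0 \<le> P" "0 \<le> Q" "0 \<le> R" using K L by (auto simp: P_def Q_def R_def)
    moreover have "c \<le> \<alpha> / 2" "c \<le> \<beta> / 4" "c \<le> \<gamma> / 2" by (auto simp: c_def)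
    ultimately show "c * P \<le> \<alpha> * P / 2" "c * Q \<le> \<beta> * Q / 4" "c * R \<le> \<gamma> * R / 2"
      using mult_right_mono by fastforce+
  qed
  moreover have "u * (a11 * u + a12 * v + a13 * w) + K * v * (a22 * v + a23 * w) + L * w * (a33 * w)
      = - (\<alpha> * P) + u * (a12 * v) + u * (a13 * w) + K * (v * (a23 * w)) - \<beta> * Q - \<gamma> * R"
    by (simp add: \<alpha>_def \<beta>_def \<gamma>_def P_def Q_def R_def algebra_simps power2_eq_square)
  ultimately have "u * (a11 * u + a12 * v + a13 * w) + K * v * (a22 * v + a23 * w)
      + L * w * (a33 * w) \<le> - (c * P) - c * Q - c * R"
    by linarith
  then show "u * (a11 * u + a12 * v + a13 * w) + K * v * (a22 * v + a23 * w) + L * w * (a33 * w)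
       \<le> - c * (u\<^sup>2 + K * v\<^sup>2 + L * w\<^sup>2)"
    by (simp add: P_def Q_def R_def algebra_simps)
qed

lemma abs_components_le_norm:
  fixes z :: "real \<times> real \<times> real"
  shows "\<bar>fst z\<bar> \<le> norm z" "\<bar>fst (snd z)\<bar> \<le> norm z" "\<bar>snd (snd z)\<bar> \<le> norm z"
proof -
  have "norm (snd z) \<le> norm z" using norm_snd_le[of "snd z" "fst z"] by simp
  then show "\<bar>fst z\<bar> \<le> norm z" "\<bar>fst (snd z)\<bar> \<le> norm z" "\<bar>snd (snd z)\<bar> \<le> norm z"
    using norm_fst_le[of "fst z" "snd z"] norm_fst_le[of "fst (snd z)" "snd (snd z)"]
      norm_snd_le[of "snd (snd z)" "fst (snd z)"] by auto
qed

lemma norm_triple_squared: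
  fixes z :: "real \<times> real \<times> real"
  shows "(norm z)\<^sup>2 = (fst z)\<^sup>2 + (fst (snd z))\<^sup>2 + (snd (snd z))\<^sup>2"
  by (cases z) (simp add: norm_Pair)

lemma weighted_sum_of_squares_bounds:
  fixes z :: "real \<times> real \<times> real"
  assumes K: "1 \<le> K" and L: "1 \<le> L"
  shows "(norm z)\<^sup>2 \<le> (fst z)\<^sup>2 + K * (fst (snd z))\<^sup>2 + L * (snd (snd z))\<^sup>2"
    and "(fst z)\<^sup>2 + K * (fst (snd z))\<^sup>2 + L * (snd (snd z))\<^sup>2 \<le> (1 + K + L) * (norm z)\<^sup>2"
proof -
  obtain u v w where z: "z = (u, v, w)" by (cases z) auto
  have "v\<^sup>2 \<le> K * v\<^sup>2" "w\<^sup>2 \<le> L * w\<^sup>2" using K L by (simp_all add: mult_le_cancel_right1)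
  then show "(norm z)\<^sup>2 \<le> (fst z)\<^sup>2 + K * (fst (snd z))\<^sup>2 + L * (snd (snd z))\<^sup>2"
    by (simp add: z norm_triple_squared)
  have "u\<^sup>2 \<le> (1 + K + L) * u\<^sup>2" "K * v\<^sup>2 \<le> (1 + K + L) * v\<^sup>2" "L * w\<^sup>2 \<le> (1 + K + L) * w\<^sup>2"
    using K L by (auto simp: mult_le_cancel_right1 intro: mult_right_mono)
  then show "(fst z)\<^sup>2 + K * (fst (snd z))\<^sup>2 + L * (snd (snd z))\<^sup>2 \<le> (1 + K + L) * (norm z)\<^sup>2"
    by (simp add: z norm_triple_squared algebra_simps)
qed

lemma weighted_perturbation_le:
  fixes u v w r1 r2 r3 N \<epsilon> K L :: real
  assumes "\<bar>u\<bar> \<le> N" "\<bar>v\<bar> \<le> N" "\<bar>w\<bar> \<le> N"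
    and "\<bar>r1\<bar> \<le> \<epsilon> * N" "\<bar>r2\<bar> \<le> \<epsilon> * N" "\<bar>r3\<bar> \<le> \<epsilon> * N" and "0 \<le> K" "0 \<le> L"
  shows "u * r1 + K * v * r2 + L * w * r3 \<le> (1 + K + L) * \<epsilon> * N\<^sup>2"
proof -
  have prod: "x * r \<le> N * (\<epsilon> * N)" if "\<bar>x\<bar> \<le> N" "\<bar>r\<bar> \<le> \<epsilon> * N" for x r
  proof -
    have "x * r \<le> \<bar>x\<bar> * \<bar>r\<bar>" by (simp add: abs_mult[symmetric])
    also have "\<dots> \<le> N * (\<epsilon> * N)" using that by (intro mult_mono) auto
    finally show ?thesis .
  qed
  have "u * r1 + K * (v * r2) + L * (w * r3) \<le> N * (\<epsilon> * N) + K * (N * (\<epsilon> * N)) + L * (N * (\<epsilon> * N))"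
    using prod assms by (intro add_mono mult_left_mono) auto
  then show ?thesis by (simp add: algebra_simps power2_eq_square)
qed

lemma locally_asymptotically_stable_if_triangular_jacobian:
  fixes F :: "real \<times> real \<times> real \<Rightarrow> real \<times> real \<times> real"
  assumes equilibrium: "F E = 0"
    and deriv: "(F has_derivative
      (\<lambda>(u, v, w). (a11 * u + a12 * v + a13 * w, a22 * v + a23 * w, a33 * w))) (at E)"
    and diagonal: "a11 < 0" "a22 < 0" "a33 < 0"
  shows "locally_asymptotically_stable F E"
proof -
  obtain K L c where K: "1 \<le> K" and L: "1 \<le> L" and c: "0 < c" and form:
    "\<And>u v w. u * (a11 * u + a12 * v + a13 * w) + K * v * (a22 * v + a23 * w) + L * w * (a33 * w)
       \<le> - c * (u\<^sup>2 + K * v\<^sup>2 + L * w\<^sup>2)"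
    using triangular_quadratic_form_negative[OF diagonal] by blast
  define M where "M = 1 + K + L"
  have M: "0 < M" using K L by (simp add: M_def)
  obtain \<delta> where \<delta>: "0 < \<delta>" and remainder: "\<And>z. norm (z - E) < \<delta> \<Longrightarrow>
      norm (F z - F E - (case z - E of (u, v, w) \<Rightarrow>
        (a11 * u + a12 * v + a13 * w, a22 * v + a23 * w, a33 * w))) \<le> c / (2 * M) * norm (z - E)"
  proof -
    have "0 < c / (2 * M)" using c M by simp
    then show ?thesis using deriv that unfolding has_derivative_at_alt by blast
  qed
  define W where
    "W z = (fst (z - E))\<^sup>2 + K * (fst (snd (z - E)))\<^sup>2 + L * (snd (snd (z - E)))\<^sup>2" for z
  define W' where "W' z d = 2 * (fst (z - E) * fst d + K * fst (snd (z - E)) * fst (snd d)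
      + L * snd (snd (z - E)) * snd (snd d))" for z d :: "real \<times> real \<times> real"
  have W_bounds: "(norm (z - E))\<^sup>2 \<le> W z" "W z \<le> M * (norm (z - E))\<^sup>2" for z
    unfolding W_def M_def using weighted_sum_of_squares_bounds[OF K L] by blast+
  have W_deriv: "(W has_derivative W' z) (at z)" for z
    unfolding W_def[abs_def] W'_def by (rule derivative_eq_intros refl | simp add: algebra_simps)+
  have "W' z (F z) \<le> - c * W z" if close: "norm (z - E) < \<delta>" for z
  proof -
    obtain u v w where z: "z - E = (u, v, w)" by (cases "z - E") auto
    define R where "R = F z - (a11 * u + a12 * v + a13 * w, a22 * v + a23 * w, a33 * w)"
    define Q where
      "Q = u * (a11 * u + a12 * v + a13 * w) + K * v * (a22 * v + a23 * w) + L * w * (a33 * w)"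
    define P where "P = u * fst R + K * v * fst (snd R) + L * w * snd (snd R)"
    have "P \<le> (1 + K + L) * (c / (2 * M)) * (norm (z - E))\<^sup>2"
      unfolding P_def using K L abs_components_le_norm[of R] abs_components_le_norm[of "z - E"]
        remainder[OF close] equilibrium
      by (intro weighted_perturbation_le) (auto simp: R_def z)
    also have "\<dots> \<le> c * W z / 2" using W_bounds(1)[of z] c M by (simp flip: M_def)
    finally have "P \<le> c * W z / 2" .
    moreover have "W' z (F z) = 2 * Q + 2 * P"
      by (simp add: W'_def z R_def P_def Q_def algebra_simps)
    moreover have "Q \<le> - (c * W z)"
      using form[of u v w] by (simp add: Q_def W_def z)
    ultimately show ?thesis by simp
  qed
  then interpret exponential_lyapunov_function F E W W' M c \<delta>
    using W_bounds W_deriv M c \<delta> by unfold_locales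
  show ?thesis by (rule locally_asymptotically_stable)
qed

section \<open>Existence of solutions and instability\<close>

primrec picard_iterate :: "('a::banach \<Rightarrow> 'a) \<Rightarrow> 'a \<Rightarrow> nat \<Rightarrow> real \<Rightarrow> 'a" where
  "picard_iterate G y0 0 = (\<lambda>t. y0)"
| "picard_iterate G y0 (Suc k) = (\<lambda>t. y0 + integral {0..t} (\<lambda>s. G (picard_iterate G y0 k s)))"

lemma continuous_on_picard_iterate:
  assumes "continuous_on UNIV G"
  shows "continuous_on {0..T} (picard_iterate G y0 k)"
proof (induction k)
  case (Suc k)
  have "(\<lambda>s. G (picard_iterate G y0 k s)) integrable_on {0..T}"
    using continuous_on_compose2[OF assms Suc] by (auto intro: integrable_continuous_interval)
  then show ?case by (simp, intro continuous_intros indefinite_integral_continuous_1)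
qed simp

lemma has_integral_power_from_0:
  assumes "0 \<le> (t::real)"
  shows "((\<lambda>s. s ^ n) has_integral t ^ Suc n / Suc n) {0..t}"
proof -
  have "((\<lambda>s. s ^ Suc n / Suc n) has_real_derivative x ^ n) (at x within {0..t})" for x
    by (rule derivative_eq_intros refl | simp)+
  then show ?thesis
    using fundamental_theorem_of_calculus[OF assms, of "\<lambda>s. s ^ Suc n / Suc n"]
    by (simp add: has_real_derivative_iff_has_vector_derivative)
qed

lemma picard_iterate_step_bound:
  assumes lip: "L-lipschitz_on UNIV G" and t: "t \<in> {0..T}"
  shows "norm (picard_iterate G y0 (Suc k) t - picard_iterate G y0 k t)
           \<le> norm (G y0) * L ^ k * t ^ Suc k / fact (Suc k)"
  using t
proof (induction k arbitrary: t)
  case 0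
  then show ?case by simp
next
  case (Suc k)
  let ?Y = "picard_iterate G y0"
  let ?c = "norm (G y0) * L ^ Suc k / fact (Suc k)"
  have L: "0 \<le> L" using lip lipschitz_on_nonneg by blast
  have int: "(\<lambda>s. G (?Y j s)) integrable_on {0..t}" for j
    using Suc.prems continuous_on_compose2[OF lipschitz_on_continuous_on[OF lip]
        continuous_on_picard_iterate[OF lipschitz_on_continuous_on[OF lip]]]
    by (intro integrable_continuous_interval) (auto intro: continuous_on_subset)
  have pow: "((\<lambda>s. ?c * s ^ Suc k) has_integral ?c * (t ^ Suc (Suc k) / Suc (Suc k))) {0..t}"
    using Suc.prems by (intro has_integral_mult_right has_integral_power_from_0) auto
  have "?Y (Suc (Suc k)) t - ?Y (Suc k) t
      = integral {0..t} (\<lambda>s. G (?Y (Suc k) s)) - integral {0..t} (\<lambda>s. G (?Y k s))"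
    by simp
  also have "\<dots> = integral {0..t} (\<lambda>s. G (?Y (Suc k) s) - G (?Y k s))"
    by (rule integral_diff[OF int int, symmetric])
  finally have "norm (?Y (Suc (Suc k)) t - ?Y (Suc k) t)
      = norm (integral {0..t} (\<lambda>s. G (?Y (Suc k) s) - G (?Y k s)))"
    by simp
  also have "\<dots> \<le> integral {0..t} (\<lambda>s. ?c * s ^ Suc k)"
  proof (rule integral_norm_bound_integral)
    fix s assume s: "s \<in> {0..t}"
    have "norm (G (?Y (Suc k) s) - G (?Y k s)) \<le> L * norm (?Y (Suc k) s - ?Y k s)"
      using lipschitz_onD[OF lip] by (simp add: dist_norm)
    also have "\<dots> \<le> L * (norm (G y0) * L ^ k * s ^ Suc k / fact (Suc k))"
      using Suc.IH[of s] Suc.prems s L by (intro mult_left_mono) auto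
    finally show "norm (G (?Y (Suc k) s) - G (?Y k s)) \<le> ?c * s ^ Suc k" by (simp add: ac_simps)
  qed (rule integrable_diff[OF int int], use pow in blast)
  also have "\<dots> = ?c * (t ^ Suc (Suc k) / Suc (Suc k))"
    using pow by (rule integral_unique)
  also have "\<dots> = norm (G y0) * L ^ Suc k * t ^ Suc (Suc k) / fact (Suc (Suc k))"
    by (simp add: field_simps)
  finally show ?case .
qed

lemma picard_iterate_uniform_limit:
  assumes lip: "L-lipschitz_on UNIV G" and T: "0 \<le> T"
  obtains y where "uniform_limit {0..T} (picard_iterate G y0) y sequentially"
proof -
  let ?Y = "picard_iterate G y0"
  define d where "d i t = ?Y (Suc i) t - ?Y i t" for i t
  define M where "M i = norm (G y0) * L ^ i * T ^ Suc i / fact (Suc i)" for i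
  have L: "0 \<le> L" using lip lipschitz_on_nonneg by blast
  have telescope: "?Y n t = y0 + (\<Sum>i<n. d i t)" for n t
    by (induction n) (auto simp: d_def simp del: picard_iterate.simps, simp)
  have "norm (d i t) \<le> M i" if "t \<in> {0..T}" for i t
  proof -
    have "norm (d i t) \<le> norm (G y0) * L ^ i * t ^ Suc i / fact (Suc i)"
      using picard_iterate_step_bound[OF lip that] by (simp add: d_def)
    also have "\<dots> \<le> M i" unfolding M_def using that L
      by (intro divide_right_mono mult_left_mono power_mono) auto
    finally show ?thesis .
  qed
  moreover have "summable M"
  proof (rule summable_comparison_test)
    show "summable (\<lambda>i. norm (G y0) * T * (inverse (fact i) * (L * T) ^ i))"
      by (intro summable_mult summable_exp)
    have "M i \<le> norm (G y0) * T * (inverse (fact i) * (L * T) ^ i)" for i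
    proof -
      have "M i = norm (G y0) * T * (L * T) ^ i / fact (Suc i)"
        by (simp add: M_def field_simps)
      also have "\<dots> \<le> norm (G y0) * T * (L * T) ^ i / fact i"
        using T L by (intro divide_left_mono) (auto intro: fact_mono)
      finally show ?thesis by (simp add: field_simps)
    qed
    then show "\<exists>N. \<forall>i\<ge>N. norm (M i) \<le> norm (G y0) * T * (inverse (fact i) * (L * T) ^ i)"
      using T L by (auto simp: M_def)
  qed
  ultimately have "uniform_limit {0..T} (\<lambda>n t. \<Sum>i<n. d i t) (\<lambda>t. \<Sum>i. d i t) sequentially"
    by (rule Weierstrass_m_test)
  then have "uniform_limit {0..T} (\<lambda>n t. y0 + (\<Sum>i<n. d i t)) (\<lambda>t. y0 + (\<Sum>i. d i t)) sequentially"
    by (intro uniform_limit_intros)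
  moreover have "?Y = (\<lambda>n t. y0 + (\<Sum>i<n. d i t))" by (intro ext) (rule telescope)
  ultimately show thesis by (metis that)
qed

lemma picard_limit_integral_equation:
  fixes G :: "'a::banach \<Rightarrow> 'a"
  assumes lip: "L-lipschitz_on UNIV G"
    and lim: "uniform_limit {0..T} (picard_iterate G y0) y sequentially" and t: "t \<in> {0..T}"
  shows "y t = y0 + integral {0..t} (\<lambda>s. G (y s))"
proof -
  let ?Y = "picard_iterate G y0"
  have contG: "continuous_on UNIV G" by (rule lipschitz_on_continuous_on[OF lip])
  have cont_Y: "continuous_on {0..T} (\<lambda>s. G (?Y n s))" for n
    using continuous_on_compose2[OF contG continuous_on_picard_iterate[OF contG]] by auto
  have lim_G: "uniform_limit {0..T} (\<lambda>n s. G (?Y n s)) (\<lambda>s. G (y s)) sequentially"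
    using lim lipschitz_on_uniformly_continuous[OF lip]
    by (rule uniform_limit_compose_uniformly_continuous_on) auto
  obtain I J where I: "\<And>n. ((\<lambda>s. G (?Y n s)) has_integral I n) {0..t}"
    and J: "((\<lambda>s. G (y s)) has_integral J) {0..t}" and IJ: "I \<longlonglongrightarrow> J"
    using uniform_limit_integral[OF uniform_limit_on_subset[OF lim_G]
        continuous_on_subset[OF cont_Y]] t
    by (metis atLeastAtMost_iff atLeastatMost_subset_iff order_refl trivial_limit_sequentially)
  have "(\<lambda>n. ?Y (Suc n) t) = (\<lambda>n. y0 + I n)" using integral_unique[OF I] by simp
  moreover have "(\<lambda>n. ?Y (Suc n) t) \<longlonglongrightarrow> y t"
    using tendsto_uniform_limitI[OF lim t] by (rule LIMSEQ_Suc)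
  moreover have "(\<lambda>n. y0 + I n) \<longlonglongrightarrow> y0 + J" by (intro tendsto_intros IJ)
  ultimately show ?thesis using J LIMSEQ_unique by (metis integral_unique)
qed

lemma lipschitz_ode_solution_exists:
  fixes G :: "'a::banach \<Rightarrow> 'a"
  assumes lip: "L-lipschitz_on UNIV G" and T: "0 \<le> T"
  obtains y where "y 0 = y0" "is_solution G {0..T} y"
proof -
  have contG: "continuous_on UNIV G" by (rule lipschitz_on_continuous_on[OF lip])
  obtain y where lim: "uniform_limit {0..T} (picard_iterate G y0) y sequentially"
    using picard_iterate_uniform_limit[OF lip T] .
  have cont_y: "continuous_on {0..T} (\<lambda>s. G (y s))"
    using continuous_on_compose2[OF contG uniform_limit_theorem[OF _ lim]]
    by (auto simp: continuous_on_picard_iterate[OF contG])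
  note integral_eq = picard_limit_integral_equation[OF lip lim]
  have "(y has_vector_derivative G (y t)) (at t within {0..T})" if t: "t \<in> {0..T}" for t
  proof (rule has_vector_derivative_transform[OF t])
    show "((\<lambda>u. y0 + integral {0..u} (\<lambda>s. G (y s))) has_vector_derivative G (y t))
        (at t within {0..T})"
      using integral_has_vector_derivative[OF cont_y t] by (auto intro: derivative_eq_intros)
  qed (simp add: integral_eq)
  moreover have "y 0 = y0" using integral_eq[of 0] T by simp
  ultimately show thesis using that unfolding is_solution_def by blast
qed

lemma lipschitz_on_closest_point_extension:
  assumes lip: "L-lipschitz_on K F" and K: "closed K" "convex K" "K \<noteq> {}"
  shows "L-lipschitz_on UNIV (\<lambda>z. F (closest_point K z))"
proof -
  have "1-lipschitz_on UNIV (closest_point K)"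
    using closest_point_lipschitz[OF K(2,1,3)] by (auto intro: lipschitz_onI)
  then have "(L * 1)-lipschitz_on UNIV (F \<circ> closest_point K)"
    using lip closest_point_in_set[OF K(1,3)]
    by (intro lipschitz_on_compose) (auto intro: lipschitz_on_subset)
  then show ?thesis by (simp add: o_def)
qed

(* Composed with the nearest-point projection onto the ball, F becomes globally Lipschitz, so Picard
   iteration gives solutions on every [0, T]; they solve the original equation while they stay in
   the ball, and stability keeps them there. *)
lemma solutions_stay_close_if_lyapunov_stable:
  fixes F :: "'a::euclidean_space \<Rightarrow> 'a"
  assumes stable: "lyapunov_stable F E" and lip: "L-lipschitz_on (cball E \<rho>) F" and \<rho>: "0 < \<rho>"
  obtains \<delta> where "0 < \<delta>"
    "\<And>z0 T. dist z0 E < \<delta> \<Longrightarrow> 0 \<le> T \<Longrightarrow>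
       \<exists>y. y 0 = z0 \<and> is_solution F {0..T} y \<and> (\<forall>t\<in>{0..T}. dist (y t) E < \<rho>)"
proof -
  obtain \<delta> where \<delta>: "0 < \<delta>" and close: "\<And>T y. 0 \<le> T \<Longrightarrow> is_solution F {0..T} y \<Longrightarrow> dist (y 0) E < \<delta>
      \<Longrightarrow> \<forall>t\<in>{0..T}. dist (y t) E < \<rho>"
    using stable \<rho> unfolding lyapunov_stable_def by meson
  define K where "K = cball E \<rho>"
  have "closed K" "convex K" "K \<noteq> {}" using \<rho> by (auto simp: K_def)
  with lip have lip_ext: "L-lipschitz_on UNIV (\<lambda>z. F (closest_point K z))"
    unfolding K_def by (rule lipschitz_on_closest_point_extension)
  have "\<exists>y. y 0 = z0 \<and> is_solution F {0..T} y \<and> (\<forall>t\<in>{0..T}. dist (y t) E < \<rho>)"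
    if z0: "dist z0 E < min \<delta> \<rho>" and T: "0 \<le> T" for z0 T
  proof -
    obtain y where y0: "y 0 = z0" and y: "is_solution (\<lambda>z. F (closest_point K z)) {0..T} y"
      using lipschitz_ode_solution_exists[OF lip_ext T] .
    have solution_while_in_K: "is_solution F {0..s} y"
      if "s \<le> T" "\<forall>t\<in>{0..s}. dist (y t) E \<le> \<rho>" for s
    proof -
      have "closest_point K (y t) = y t" if "t \<in> {0..s}" for t
        using that \<open>\<forall>t\<in>{0..s}. dist (y t) E \<le> \<rho>\<close>
        by (intro closest_point_self) (force simp: K_def dist_commute)
      then show ?thesis using is_solution_subset[OF y, of "{0..s}"] \<open>s \<le> T\<close>
        by (auto simp: is_solution_def)
    qed
    have stays: "\<forall>t\<in>{0..T}. dist (y t) E < \<rho>"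
    proof (rule continuous_on_stays_below)
      show "continuous_on {0..T} (\<lambda>t. dist (y t) E)"
        by (intro continuous_intros is_solution_continuous_on[OF y])
      show "dist (y 0) E < \<rho>" using y0 z0 by simp
    next
      fix s assume "0 < s" "s \<le> T" "\<forall>t\<in>{0..s}. dist (y t) E \<le> \<rho>"
      then show "dist (y s) E < \<rho>" using close[of s y] solution_while_in_K[of s] y0 z0 by auto
    qed
    then show ?thesis using y0 solution_while_in_K[of T] by (auto intro: less_imp_le)
  qed
  moreover have "0 < min \<delta> \<rho>" using \<delta> \<rho> by simp
  ultimately show thesis using that by blast
qed

lemma exp_growth_along_direction:
  fixes F :: "'a::euclidean_space \<Rightarrow> 'a"
  assumes y: "is_solution F {0..T} y" and T: "0 \<le> T" and close: "\<forall>t\<in>{0..T}. dist (y t) E < \<rho>"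
    and growth: "\<And>z. dist z E < \<rho> \<Longrightarrow> 0 < (z - E) \<bullet> e \<Longrightarrow> \<kappa> * ((z - E) \<bullet> e) \<le> F z \<bullet> e"
    and start: "0 < (y 0 - E) \<bullet> e"
  shows "(y 0 - E) \<bullet> e * exp (\<kappa> * T) \<le> (y T - E) \<bullet> e"
proof -
  define n where "n t = (y t - E) \<bullet> e" for t
  have n_cont: "continuous_on {0..T} n"
    unfolding n_def by (intro continuous_intros is_solution_continuous_on[OF y])
  have n_deriv: "(n has_real_derivative F (y t) \<bullet> e) (at t)" if "0 < t" "t < T" for t
    using bounded_linear.has_vector_derivative[OF bounded_linear_inner_left
        has_vector_derivative_diff[OF is_solution_has_vector_derivative_at[OF y that]
          has_vector_derivative_const]]
    by (simp add: n_def[abs_def] has_real_derivative_iff_has_vector_derivative)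
  have n_grows: "n 0 * exp (\<kappa> * s) \<le> n s" if "0 \<le> s" "s \<le> T" "\<forall>t\<in>{0..<s}. 0 < n t" for s
  proof -
    have "- n s \<le> - n 0 * exp (\<kappa> * s)"
    proof (rule exp_bound_if_derivative_le[where g' = "\<lambda>t. - (F (y t) \<bullet> e)"])
      show "continuous_on {0..s} (\<lambda>t. - n t)"
        using that by (intro continuous_intros continuous_on_subset[OF n_cont]) auto
      fix t assume t: "0 < t" "t < s"
      show "((\<lambda>t. - n t) has_real_derivative - (F (y t) \<bullet> e)) (at t)"
        using t that by (intro derivative_intros n_deriv) auto
      show "- (F (y t) \<bullet> e) \<le> \<kappa> * - n t"
        using growth[of "y t"] close that t by (auto simp: n_def)
    qed fact
    then show ?thesis by simp
  qed
  have "\<forall>t\<in>{0..T}. - n t < 0"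
  proof (rule continuous_on_stays_below)
    show "continuous_on {0..T} (\<lambda>t. - n t)" by (intro continuous_intros n_cont)
    fix s assume "0 < s" "s \<le> T" "\<forall>t\<in>{0..<s}. - n t < 0"
    then have "n 0 * exp (\<kappa> * s) \<le> n s" using n_grows[of s] by auto
    moreover have "0 < n 0 * exp (\<kappa> * s)" using start by (simp add: n_def)
    ultimately show "- n s < 0" by linarith
  qed (use start in \<open>simp add: n_def\<close>)
  then show ?thesis using n_grows[of T] T by (auto simp: n_def)
qed

lemma unstable_if_growth_along_direction:
  fixes F :: "'a::euclidean_space \<Rightarrow> 'a"
  assumes lip: "L-lipschitz_on (cball E \<rho>) F" and \<rho>: "0 < \<rho>" and e: "norm e = 1" and \<kappa>: "0 < \<kappa>"
    and growth: "\<And>z. dist z E < \<rho> \<Longrightarrow> 0 < (z - E) \<bullet> e \<Longrightarrow> \<kappa> * ((z - E) \<bullet> e) \<le> F z \<bullet> e"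
  shows "unstable F E"
  unfolding unstable_def
proof
  assume "lyapunov_stable F E"
  then obtain \<delta> where \<delta>: "0 < \<delta>" and solutions: "\<And>z0 T. dist z0 E < \<delta> \<Longrightarrow> 0 \<le> T \<Longrightarrow>
       \<exists>y. y 0 = z0 \<and> is_solution F {0..T} y \<and> (\<forall>t\<in>{0..T}. dist (y t) E < \<rho>)"
    using solutions_stay_close_if_lyapunov_stable[OF _ lip \<rho>] by blast
  define d where "d = min \<delta> \<rho> / 2"
  have d: "0 < d" "d < \<delta>" "d < \<rho>" using \<delta> \<rho> by (auto simp: d_def)
  define T where "T = ln (\<rho> / d) / \<kappa>"
  have T: "0 \<le> T" "d * exp (\<kappa> * T) = \<rho>" using d \<kappa> by (auto simp: T_def)
  have "dist (E + d *\<^sub>R e) E < \<delta>" using d e by (simp add: dist_norm)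
  then obtain y where y0: "y 0 = E + d *\<^sub>R e" and y: "is_solution F {0..T} y"
    and close: "\<forall>t\<in>{0..T}. dist (y t) E < \<rho>"
    using solutions[OF _ T(1)] by blast
  have "(y 0 - E) \<bullet> e = d" using e by (simp add: y0 inner_commute power2_norm_eq_inner[symmetric])
  then have "\<rho> \<le> (y T - E) \<bullet> e"
    using exp_growth_along_direction[OF y T(1) close growth] d T(2) by simp
  also have "\<dots> \<le> norm (y T - E)"
    using norm_cauchy_schwarz[of "y T - E" e] e by simp
  also have "\<dots> < \<rho>" using close T by (simp add: dist_norm)
  finally show False by simp
qed

lemma lipschitz_on_if_continuous_gradient:
  fixes f :: "'a::euclidean_space \<Rightarrow> real"
  assumes K: "compact K" "convex K"
    and deriv: "\<And>z. z \<in> K \<Longrightarrow> (f has_derivative (\<lambda>d. g z \<bullet> d)) (at z within K)"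
    and cont: "continuous_on K g"
  obtains C where "C-lipschitz_on K f"
proof -
  obtain B where B: "0 \<le> B" "\<And>z. z \<in> K \<Longrightarrow> norm (g z) \<le> B"
    using compact_imp_bounded[OF compact_continuous_image[OF cont K(1)]]
    by (metis bounded_pos image_eqI less_le_not_le)
  have "onorm (\<lambda>d. g z \<bullet> d) \<le> B" if "z \<in> K" for z
  proof (rule onorm_le)
    fix d
    have "norm (g z \<bullet> d) \<le> norm (g z) * norm d" by (simp add: Cauchy_Schwarz_ineq2)
    also have "\<dots> \<le> B * norm d" using B(2)[OF that] by (simp add: mult_right_mono)
    finally show "norm (g z \<bullet> d) \<le> B * norm d" .
  qed
  then have "B-lipschitz_on K f"
    using bounded_derivative_imp_lipschitz[OF deriv K(2) _ B(1)] by blast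
  then show thesis by (rule that)
qed

lemma C1_differentiable_onI:
  assumes "\<And>x. x \<in> A \<Longrightarrow> (f has_real_derivative f' x) (at x)" "continuous_on A f'"
  shows "f C1_differentiable_on A"
  using assms unfolding C1_differentiable_on_def has_real_derivative_iff_has_vector_derivative
  by blast

lemma C1_differentiable_on_has_real_derivative:
  fixes f :: "real \<Rightarrow> real"
  assumes "f C1_differentiable_on A" "x \<in> A"
  shows "(f has_real_derivative deriv f x) (at x)"
  using assms DERIV_deriv_iff_real_differentiable by (auto simp: C1_differentiable_on_eq)

lemma C1_differentiable_on_continuous_on_deriv:
  fixes f :: "real \<Rightarrow> real"
  assumes "f C1_differentiable_on A"
  shows "continuous_on A (deriv f)"
proof -
  have "vector_derivative f (at x) = deriv f x" if "x \<in> A" for x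
    using C1_differentiable_on_has_real_derivative[OF assms that]
    by (simp add: has_real_derivative_iff_has_vector_derivative vector_derivative_at)
  then show ?thesis
    using assms continuous_on_eq by (fastforce simp: C1_differentiable_on_eq)
qed

section \<open>The acid-mediated tumour model\<close>

locale acid_tumor_model =
  fixes S mu G Gam dS :: "real \<Rightarrow> real" and phi nu alpha beta r xs :: real and H N :: "real set"
  assumes H: "open H" "1 \<in> H" and N: "open N" "0 \<in> N"
    and smooth: "S C1_differentiable_on H" "mu C1_differentiable_on H" "G C1_differentiable_on H"
      "dS C1_differentiable_on H" "Gam C1_differentiable_on N"
    and nu_pos: "0 < nu" and mu_pos: "0 < mu 1" and Gam_pos: "0 < Gam 0"
    and xs_in: "0 < xs" "xs < 1"
    and xs_root: "xs * (1 - xs) * S 1 + mu 1 * (1 - xs) - nu * xs = 0"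
begin

definition vector_field :: "real \<times> real \<times> real \<Rightarrow> real \<times> real \<times> real" where
  "vector_field = (\<lambda>(x, h, n). (x * (1 - x) * S h + mu h * (1 - x) - nu * x,
      alpha * n * (1 + beta * x) * G h - Gam n * (h - 1),
      r * n * (1 - n) - (1 - phi * x) * dS h * n))"

definition jacobian_row_x :: "real \<times> real \<times> real \<Rightarrow> real \<times> real \<times> real" where
  "jacobian_row_x = (\<lambda>(x, h, n).
      ((1 - 2 * x) * S h - mu h - nu, x * (1 - x) * deriv S h + deriv mu h * (1 - x), 0))"

definition jacobian_row_h :: "real \<times> real \<times> real \<Rightarrow> real \<times> real \<times> real" where
  "jacobian_row_h = (\<lambda>(x, h, n).
      (alpha * n * beta * G h, alpha * n * (1 + beta * x) * deriv G h - Gam n,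
       alpha * (1 + beta * x) * G h - deriv Gam n * (h - 1)))"

definition jacobian_row_n :: "real \<times> real \<times> real \<Rightarrow> real \<times> real \<times> real" where
  "jacobian_row_n = (\<lambda>(x, h, n).
      (phi * dS h * n, - (1 - phi * x) * deriv dS h * n, r * (1 - 2 * n) - (1 - phi * x) * dS h))"

lemma vector_field_has_derivative:
  assumes "z \<in> UNIV \<times> H \<times> N"
  shows "(vector_field has_derivative
    (\<lambda>d. (jacobian_row_x z \<bullet> d, jacobian_row_h z \<bullet> d, jacobian_row_n z \<bullet> d))) (at z)"
proof -
  obtain x h n where z: "z = (x, h, n)" and h: "h \<in> H" and n: "n \<in> N" using assms by auto
  have along_h: "((\<lambda>z. f (fst (snd z))) has_derivative (\<lambda>d. fst (snd d) * deriv f h)) (at z)"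
    if "f C1_differentiable_on H" for f
    using DERIV_compose_FDERIV[where f=f and g="\<lambda>z. fst (snd z)" and x=z and s=UNIV]
      C1_differentiable_on_has_real_derivative[OF that h]
    by (simp add: z has_derivative_fst has_derivative_snd)
  have along_n: "((\<lambda>z. Gam (snd (snd z))) has_derivative (\<lambda>d. snd (snd d) * deriv Gam n)) (at z)"
    using DERIV_compose_FDERIV[where f=Gam and g="\<lambda>z. snd (snd z)" and x=z and s=UNIV]
      C1_differentiable_on_has_real_derivative[OF smooth(5) n]
    by (simp add: z has_derivative_snd)
  have vector_field_eq: "vector_field = (\<lambda>z.
      (fst z * (1 - fst z) * S (fst (snd z)) + mu (fst (snd z)) * (1 - fst z) - nu * fst z,
       alpha * snd (snd z) * (1 + beta * fst z) * G (fst (snd z))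
         - Gam (snd (snd z)) * (fst (snd z) - 1),
       r * snd (snd z) * (1 - snd (snd z)) - (1 - phi * fst z) * dS (fst (snd z)) * snd (snd z)))"
    by (auto simp: vector_field_def fun_eq_iff)
  show ?thesis unfolding vector_field_eq
    by (rule has_derivative_eq_rhs, (rule derivative_intros along_h[OF smooth(1)]
        along_h[OF smooth(2)] along_h[OF smooth(3)] along_h[OF smooth(4)] along_n)+)
      (auto simp: fun_eq_iff z jacobian_row_x_def jacobian_row_h_def jacobian_row_n_def inner_prod_def algebra_simps)
qed

lemma gradients_continuous_on:
  "continuous_on (UNIV \<times> H \<times> N) jacobian_row_x" "continuous_on (UNIV \<times> H \<times> N) jacobian_row_h"
  "continuous_on (UNIV \<times> H \<times> N) jacobian_row_n"
proof -
  have along_h: "continuous_on (UNIV \<times> H \<times> N) (\<lambda>z. f (fst (snd z)))" if "continuous_on H f" for f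
    by (rule continuous_on_compose2[OF that]) (auto intro!: continuous_intros)
  have along_n: "continuous_on (UNIV \<times> H \<times> N) (\<lambda>z. f (snd (snd z)))" if "continuous_on N f" for f
    by (rule continuous_on_compose2[OF that]) (auto intro!: continuous_intros)
  note continuous_parts = smooth[THEN C1_differentiable_on_continuous_on_deriv]
    smooth[THEN C1_diff_imp_diff, THEN differentiable_imp_continuous_on]
  show "continuous_on (UNIV \<times> H \<times> N) jacobian_row_x" "continuous_on (UNIV \<times> H \<times> N) jacobian_row_h"
    "continuous_on (UNIV \<times> H \<times> N) jacobian_row_n"
    unfolding jacobian_row_x_def jacobian_row_h_def jacobian_row_n_def case_prod_beta
    by (intro continuous_intros along_h along_n continuous_parts)+
qed

lemma vector_field_lipschitz_near_equilibrium:
  obtains \<rho> L where "0 < \<rho>" "L-lipschitz_on (cball (xs, 1, 0) \<rho>) vector_field"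
proof -
  have "open (UNIV \<times> H \<times> N)" "(xs, 1, 0) \<in> UNIV \<times> H \<times> N" using H N by (auto intro: open_Times)
  then obtain \<rho> where \<rho>: "0 < \<rho>" and ball: "cball (xs, 1, 0) \<rho> \<subseteq> UNIV \<times> H \<times> N"
    using open_contains_cball by blast
  let ?K = "cball (xs, 1, 0) \<rho> :: (real \<times> real \<times> real) set"
  have K: "compact ?K" "convex ?K" by (simp_all add: compact_cball convex_cball)
  have deriv: "(vector_field has_derivative
      (\<lambda>d. (jacobian_row_x z \<bullet> d, jacobian_row_h z \<bullet> d, jacobian_row_n z \<bullet> d))) (at z within ?K)"
    if "z \<in> ?K" for z
    using vector_field_has_derivative ball that by (blast intro: has_derivative_at_withinI)
  have "((\<lambda>z. fst (vector_field z)) has_derivative (\<lambda>d. jacobian_row_x z \<bullet> d)) (at z within ?K)"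
    "((\<lambda>z. fst (snd (vector_field z))) has_derivative (\<lambda>d. jacobian_row_h z \<bullet> d)) (at z within ?K)"
    "((\<lambda>z. snd (snd (vector_field z))) has_derivative (\<lambda>d. jacobian_row_n z \<bullet> d)) (at z within ?K)"
    if "z \<in> ?K" for z
    using has_derivative_fst[OF deriv[OF that]]
      has_derivative_fst[OF has_derivative_snd[OF deriv[OF that]]]
      has_derivative_snd[OF has_derivative_snd[OF deriv[OF that]]] by simp_all
  note component_deriv = this
  obtain C1 where C1: "C1-lipschitz_on ?K (\<lambda>z. fst (vector_field z))"
    using lipschitz_on_if_continuous_gradient[OF K component_deriv(1)]
      continuous_on_subset[OF gradients_continuous_on(1) ball] by blast
  obtain C2 where C2: "C2-lipschitz_on ?K (\<lambda>z. fst (snd (vector_field z)))"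
    using lipschitz_on_if_continuous_gradient[OF K component_deriv(2)]
      continuous_on_subset[OF gradients_continuous_on(2) ball] by blast
  obtain C3 where C3: "C3-lipschitz_on ?K (\<lambda>z. snd (snd (vector_field z)))"
    using lipschitz_on_if_continuous_gradient[OF K component_deriv(3)]
      continuous_on_subset[OF gradients_continuous_on(3) ball] by blast
  have "(sqrt (C1\<^sup>2 + (sqrt (C2\<^sup>2 + C3\<^sup>2))\<^sup>2))-lipschitz_on ?K vector_field"
    using lipschitz_on_Pair[OF C1 lipschitz_on_Pair[OF C2 C3]] by simp
  with \<rho> show thesis by (rule that)
qed

lemma vector_field_equilibrium: "vector_field (xs, 1, 0) = 0"
  using xs_root by (simp add: vector_field_def zero_prod_def)

lemma jacobian_entry_xx_negative: "(1 - 2 * xs) * S 1 - mu 1 - nu < 0"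
proof (cases "0 \<le> S 1")
  case True
  have "((1 - 2 * xs) * S 1 - mu 1 - nu) * xs = - (xs * xs * S 1) - mu 1"
    using xs_root by algebra
  also have "\<dots> < 0" using True xs_in mu_pos by (smt (verit) mult_nonneg_nonneg)
  finally show ?thesis using xs_in by (simp add: mult_less_0_iff)
next
  case False
  have "((1 - 2 * xs) * S 1 - mu 1 - nu) * (1 - xs) = (1 - xs) * (1 - xs) * S 1 - nu"
    using xs_root by algebra
  also have "\<dots> < 0" using False xs_in nu_pos by (smt (verit) mult_nonneg_nonpos zero_le_mult_iff)
  finally show ?thesis using xs_in by (simp add: mult_less_0_iff)
qed

lemma vector_field_jacobian_at_equilibrium:
  "(vector_field has_derivative (\<lambda>(u, v, w).
      (((1 - 2 * xs) * S 1 - mu 1 - nu) * u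
         + (xs * (1 - xs) * deriv S 1 + deriv mu 1 * (1 - xs)) * v + 0 * w,
       - Gam 0 * v + alpha * (1 + beta * xs) * G 1 * w,
       (r - (1 - phi * xs) * dS 1) * w))) (at (xs, 1, 0))"
  using H N by (intro has_derivative_eq_rhs[OF vector_field_has_derivative])
    (auto simp: jacobian_row_x_def jacobian_row_h_def jacobian_row_n_def inner_prod_def fun_eq_iff
      algebra_simps)

(* The paper's D(h, x) appears inlined as (1 - phi * x) * dS h, so R0 < 1 reads
   r < (1 - phi * xs) * dS 1. *)
theorem locally_asymptotically_stable_if_R0_less_1:
  assumes "r < (1 - phi * xs) * dS 1"
  shows "locally_asymptotically_stable vector_field (xs, 1, 0)"
  using locally_asymptotically_stable_if_triangular_jacobian[OF vector_field_equilibrium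
      vector_field_jacobian_at_equilibrium] jacobian_entry_xx_negative Gam_pos assms
  by simp

theorem unstable_if_R0_greater_1:
  assumes "(1 - phi * xs) * dS 1 < r"
  shows "unstable vector_field (xs, 1, 0)"
proof -
  define \<kappa> where "\<kappa> = (r - (1 - phi * xs) * dS 1) / 2"
  define growth where
    "growth z = r * (1 - snd (snd z)) - (1 - phi * fst z) * dS (fst (snd z))" for z
  have \<kappa>: "0 < \<kappa>" using assms by (simp add: \<kappa>_def)
  have "isCont (\<lambda>z :: real \<times> real \<times> real. fst (snd z)) (xs, 1, 0)" by (intro continuous_intros)
  then have "isCont (\<lambda>z :: real \<times> real \<times> real. dS (fst (snd z))) (xs, 1, 0)"
    by (rule isCont_o2)
      (simp add: DERIV_isCont[OF C1_differentiable_on_has_real_derivative[OF smooth(4) H(2)]])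
  then have "isCont growth (xs, 1, 0)"
    unfolding growth_def by (intro continuous_intros)
  then obtain \<rho>1 where \<rho>1: "0 < \<rho>1"
    and close: "\<And>z. dist z (xs, 1, 0) < \<rho>1 \<Longrightarrow> dist (growth z) (growth (xs, 1, 0)) < \<kappa>"
    using \<kappa> unfolding continuous_at_eps_delta by blast
  have "growth (xs, 1, 0) = 2 * \<kappa>" by (simp add: growth_def \<kappa>_def)
  then have fast: "\<kappa> < growth z" if "dist z (xs, 1, 0) < \<rho>1" for z
    using close[OF that] by (simp add: dist_real_def abs_less_iff)
  obtain \<rho>2 L where \<rho>2: "0 < \<rho>2" and lip: "L-lipschitz_on (cball (xs, 1, 0) \<rho>2) vector_field"
    using vector_field_lipschitz_near_equilibrium by blast
  show ?thesis
  proof (rule unstable_if_growth_along_direction[where e = "(0, 0, 1)"])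
    show "L-lipschitz_on (cball (xs, 1, 0) (min \<rho>1 \<rho>2)) vector_field"
      using lip by (rule lipschitz_on_subset) (simp add: subset_cball)
    show "0 < min \<rho>1 \<rho>2" using \<rho>1 \<rho>2 by simp
    show "norm (0::real, 0::real, 1::real) = 1" by (simp add: norm_Pair)
    show "0 < \<kappa>" by (fact \<kappa>)
    fix z :: "real \<times> real \<times> real"
    assume "dist z (xs, 1, 0) < min \<rho>1 \<rho>2" and "0 < (z - (xs, 1, 0)) \<bullet> (0, 0, 1)"
    then have "\<kappa> < growth z" "0 < snd (snd z)" using fast by (simp_all add: inner_prod_def)
    moreover have "vector_field z \<bullet> (0, 0, 1) = snd (snd z) * growth z"
      by (cases z) (simp add: vector_field_def growth_def inner_prod_def algebra_simps)
    ultimately show "\<kappa> * ((z - (xs, 1, 0)) \<bullet> (0, 0, 1)) \<le> vector_field z \<bullet> (0, 0, 1)"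
      by (simp add: inner_prod_def)
  qed
qed

end

lemma hill_C1:
  assumes "0 < h50"
  shows "(\<lambda>h. dmax * h powr m / (h50 powr m + h powr m)) C1_differentiable_on {0<..}"
proof (rule C1_differentiable_onI)
  have pos: "0 < h50 powr m + h powr m" for h using assms by (simp add: add_pos_nonneg)
  show "continuous_on {0<..} (\<lambda>h. (dmax * (m * h powr (m - 1)) * (h50 powr m + h powr m)
      - dmax * h powr m * (m * h powr (m - 1))) / (h50 powr m + h powr m)\<^sup>2)"
    using pos by (intro continuous_intros) (auto simp: less_imp_neq[symmetric])
  fix h :: real assume "h \<in> {0<..}"
  then show "((\<lambda>h. dmax * h powr m / (h50 powr m + h powr m)) has_real_derivative
      (dmax * (m * h powr (m - 1)) * (h50 powr m + h powr m)
      - dmax * h powr m * (m * h powr (m - 1))) / (h50 powr m + h powr m)\<^sup>2) (at h)"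
    using pos[of h] by (auto intro!: derivative_eq_intros simp: power2_eq_square)
qed

lemma logistic_C1: "(\<lambda>h. s0 / (1 + exp (- lam * (h - hc)))) C1_differentiable_on A"
proof (rule C1_differentiable_onI)
  have pos: "1 + exp (- lam * (h - hc)) \<noteq> 0" for h by (smt (verit) exp_gt_zero)
  show "continuous_on A (\<lambda>h. s0 * lam * exp (- lam * (h - hc)) / (1 + exp (- lam * (h - hc)))\<^sup>2)"
    using pos by (intro continuous_intros) auto
  fix h
  show "((\<lambda>h. s0 / (1 + exp (- lam * (h - hc)))) has_real_derivative
      s0 * lam * exp (- lam * (h - hc)) / (1 + exp (- lam * (h - hc)))\<^sup>2) (at h)"
    using pos[of h] by (auto intro!: derivative_eq_intros simp: power2_eq_square)
qed

lemma power_C1: "(\<lambda>h. mu0 * h powr p) C1_differentiable_on {0<..}"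
  by (rule C1_differentiable_onI[where f' = "\<lambda>h. mu0 * (p * h powr (p - 1))"])
    (auto intro!: derivative_eq_intros continuous_intros)

lemma saturation_C1:
  assumes "0 < Kg"
  shows "(\<lambda>h. Kg / (Kg + h)) C1_differentiable_on {0<..}"
  using assms
  by (intro C1_differentiable_onI[where f' = "\<lambda>h. - Kg / (Kg + h)\<^sup>2"])
    (auto intro!: derivative_eq_intros continuous_intros simp: power2_eq_square)

lemma clearance_C1:
  assumes "0 < eta"
  shows "(\<lambda>n. gamma0 / (1 + eta * n)) C1_differentiable_on {- 1 / eta<..}"
proof -
  have pos: "1 + eta * n \<noteq> 0" if "n \<in> {- 1 / eta<..}" for n
    using that assms by (auto simp: field_simps)
  show ?thesis
    using pos by (intro C1_differentiable_onI[where f' = "\<lambda>n. - gamma0 * eta / (1 + eta * n)\<^sup>2"])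
      (auto intro!: derivative_eq_intros continuous_intros simp: power2_eq_square)
qed

theorem theorem2:
  fixes s0 lam hc c phi dmax h50 m mu0 p nu alpha beta Kg gamma0 eta r xs :: real
    and S dS mu G Gam D :: "real \<Rightarrow> real"
    and DD :: "real \<Rightarrow> real \<Rightarrow> real"
    and F :: "real \<times> real \<times> real \<Rightarrow> real \<times> real \<times> real"
  assumes pos: "s0 > 0" "lam > 0" "hc > 0" "c > 0" "phi > 0" "dmax > 0" "h50 > 0" "m > 0"
      "mu0 > 0" "p > 0" "nu > 0" "alpha > 0" "beta > 0" "Kg > 0" "gamma0 > 0" "eta > 0" "r > 0"
    and dS_def: "\<And>h. dS h = dmax * h powr m / (h50 powr m + h powr m)"
    and S_def: "\<And>h. S h = s0 / (1 + exp (- lam * (h - hc))) - c + phi * dS h"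
    and mu_def: "\<And>h. mu h = mu0 * h powr p"
    and G_def: "\<And>h. G h = Kg / (Kg + h)"
    and Gamma_def: "\<And>n. Gam n = gamma0 / (1 + eta * n)"
    and D_def: "\<And>h x. DD h x = (1 - phi * x) * dS h"
    and F_def: "\<And>x h n. F (x, h, n) =
        (x * (1 - x) * S h + mu h * (1 - x) - nu * x,
         alpha * n * (1 + beta * x) * G h - Gam n * (h - 1),
         r * n * (1 - n) - DD h x * n)"
    and xs_in: "0 < xs" "xs < 1"
    and xs_root: "xs * (1 - xs) * S 1 + mu0 * (1 - xs) - nu * xs = 0"
    and D_pos: "DD 1 xs > 0"
  shows "(r / DD 1 xs < 1 \<longrightarrow> locally_asymptotically_stable F (xs, 1, 0))
       \<and> (r / DD 1 xs > 1 \<longrightarrow> unstable F (xs, 1, 0))"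
proof -
  have rate_functions: "dS = (\<lambda>h. dmax * h powr m / (h50 powr m + h powr m))"
    "S = (\<lambda>h. s0 / (1 + exp (- lam * (h - hc))) - c + phi * dS h)" "mu = (\<lambda>h. mu0 * h powr p)"
    "G = (\<lambda>h. Kg / (Kg + h))" "Gam = (\<lambda>n. gamma0 / (1 + eta * n))"
    using dS_def S_def mu_def G_def Gamma_def by auto
  interpret acid_tumor_model S mu G Gam dS phi nu alpha beta r xs "{0<..}" "{- 1 / eta<..}"
  proof
    show "dS C1_differentiable_on {0<..}" "mu C1_differentiable_on {0<..}"
      "G C1_differentiable_on {0<..}" "Gam C1_differentiable_on {- 1 / eta<..}"
      unfolding rate_functions using hill_C1 power_C1 saturation_C1 clearance_C1 pos by simp_all
    then show "S C1_differentiable_on {0<..}"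
      unfolding rate_functions(2) by (intro C1_differentiable_on_add C1_differentiable_on_diff
          C1_differentiable_on_mult logistic_C1 C1_differentiable_on_const)
  qed (use pos xs_in xs_root in \<open>auto simp: mu_def Gamma_def\<close>)
  have "F = vector_field" by (auto simp: fun_eq_iff vector_field_def F_def D_def)
  then show ?thesis
    using locally_asymptotically_stable_if_R0_less_1 unstable_if_R0_greater_1 D_pos
    by (simp add: D_def divide_less_eq less_divide_eq)
qed

end
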